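(* Fix an integer $\Delta\geq 3$. There is a function $\varepsilon:\mathbb{N}\to\mathbb{R}$, depending only on $n$ (for the fixed $\Delta$), with $\varepsilon(n)\to 0$ as $n\to\infty$, such that for every integer $n\geq 2$ and every rooted tree $T$ of order $n$ and maximum degree at most $\Delta$, $$\sum_{u\in V(T)}\min\left\{d(u),n^{\downarrow}(u)\right\}\geq (1-\varepsilon(n))\frac{\Delta-2}{(\Delta-1)^2}\,n\log_{(\Delta-1)}\left(\log_{(\Delta-1)}(n)\right).$$
   Context: For a vertex $u$ of a rooted tree $T$, $d(u)$ denotes the depth of $u$ (its distance to the root) and $n^{\downarrow}(u)$ denotes the number of vertices of $T$ that are equal to $u$ or are descendants of $u$. The $o(1)$ term of the paper is written here as $\varepsilon(n)$. *)

theory Defs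
  imports Complex_Main
begin

text \<open>A rooted tree is encoded by a finite vertex set V (of naturals), a root r \<in> V
and a parent map p with p r = r, p v \<in> V for all v \<in> V, and such that every
vertex reaches the root by iterating p.  The underlying (undirected) tree has
edges {v, p v} for v \<in> V - {r}.\<close>

definition rooted_tree :: "nat set \<Rightarrow> nat \<Rightarrow> (nat \<Rightarrow> nat) \<Rightarrow> bool" where
  "rooted_tree V r p \<longleftrightarrow> finite V \<and> r \<in> V \<and> p r = r \<and> (\<forall>v\<in>V. p v \<in> V)
     \<and> (\<forall>v\<in>V. \<exists>k. (p ^^ k) v = r)"

definition children :: "nat set \<Rightarrow> nat \<Rightarrow> (nat \<Rightarrow> nat) \<Rightarrow> nat \<Rightarrow> nat set" where
  "children V r p u = {v \<in> V. v \<noteq> r \<and> p v = u}"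

definition tree_degree :: "nat set \<Rightarrow> nat \<Rightarrow> (nat \<Rightarrow> nat) \<Rightarrow> nat \<Rightarrow> nat" where
  "tree_degree V r p u = card (children V r p u) + (if u = r then 0 else 1)"

text \<open>Depth d(u): distance from u to the root.\<close>
definition depth :: "nat \<Rightarrow> (nat \<Rightarrow> nat) \<Rightarrow> nat \<Rightarrow> nat" where
  "depth r p u = (LEAST k. (p ^^ k) u = r)"

definition subtree_size :: "nat set \<Rightarrow> (nat \<Rightarrow> nat) \<Rightarrow> nat \<Rightarrow> nat" where
  "subtree_size V p u = card {v \<in> V. \<exists>k. (p ^^ k) v = u}"

end

theory Submission
  imports Defs "HOL-Analysis.Harmonic_Numbers" "HOL-Real_Asymp.Real_Asymp"
begin

text \<open>Call u heavy if \<open>n\<down>(u) \<ge> t\<close>. The light vertices fall into subtrees of size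
\<open>< t\<close> hanging off heavy vertices, at most \<open>\<Delta> - 1\<close> per heavy vertex plus one more at the
root, so there are at least \<open>(n - t) / ((\<Delta> - 1) t)\<close> heavy vertices. At most \<open>\<Delta>^D\<close>
vertices have depth \<open>< D\<close>, so counting for each \<open>t \<le> D\<close> the vertices with
\<open>d(u) \<ge> t\<close> and \<open>n\<down>(u) \<ge> t\<close> gives
\<open>\<Sum>\<^sub>u min {d(u), n\<down>(u)} \<ge> \<Sum>\<^bsub>t = 1..D\<^esub> ((n - t) / ((\<Delta> - 1) t) - \<Delta>^D)\<close>.
With \<open>D = \<lfloor>log\<^sub>\<Delta> n / 2\<rfloor>\<close> the error is \<open>O(\<surd>n log n)\<close>, while the harmonic sum
contributes \<open>n ln (log n) / (\<Delta> - 1)\<close>; this beats the claimed bound because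
\<open>(\<Delta> - 2) / (\<Delta> - 1) < ln (\<Delta> - 1)\<close>.\<close>

definition subtree :: "nat set \<Rightarrow> (nat \<Rightarrow> nat) \<Rightarrow> nat \<Rightarrow> nat set" where
  "subtree V p u = {v \<in> V. \<exists>k. (p ^^ k) v = u}"

lemma subtree_size_eq_card_subtree: "subtree_size V p u = card (subtree V p u)"
  by (simp add: subtree_size_def subtree_def)

lemma rooted_tree_funpow_in:
  assumes "rooted_tree V r p" "v \<in> V"
  shows "(p ^^ k) v \<in> V"
  using assms by (induction k) (auto simp: rooted_tree_def)

lemma subtree_root:
  assumes "rooted_tree V r p"
  shows "subtree V p r = V"
  using assms by (auto simp: rooted_tree_def subtree_def)

lemma funpow_depth_eq_root:
  assumes "rooted_tree V r p" "v \<in> V"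
  shows "(p ^^ depth r p v) v = r"
  unfolding depth_def by (rule LeastI_ex) (use assms in \<open>auto simp: rooted_tree_def\<close>)

lemma depth_root [simp]: "depth r p r = 0"
  unfolding depth_def by simp

lemma depth_parent:
  assumes rt: "rooted_tree V r p" and v: "v \<in> V" "v \<noteq> r"
  shows "depth r p v = Suc (depth r p (p v))"
proof -
  have pv: "p v \<in> V" using rt v by (auto simp: rooted_tree_def)
  have "(p ^^ Suc (depth r p (p v))) v = r"
    using funpow_depth_eq_root[OF rt pv] by (simp add: funpow_Suc_right del: funpow.simps)
  then have le: "depth r p v \<le> Suc (depth r p (p v))"
    unfolding depth_def by (rule Least_le)
  have dv: "(p ^^ depth r p v) v = r" using funpow_depth_eq_root[OF rt v(1)] .
  then obtain j where j: "depth r p v = Suc j"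
    using v(2) by (cases "depth r p v") auto
  with dv have "(p ^^ j) (p v) = r" by (simp add: funpow_Suc_right del: funpow.simps)
  then have "depth r p (p v) \<le> j" unfolding depth_def by (rule Least_le)
  with le j show ?thesis by simp
qed

lemma card_depth_eq_le:
  assumes rt: "rooted_tree V r p" and ch: "\<forall>u\<in>V. card (children V r p u) \<le> \<Delta>"
  shows "card {u\<in>V. depth r p u = k} \<le> \<Delta> ^ k"
proof (induction k)
  case 0
  have "{u\<in>V. depth r p u = 0} \<subseteq> {r}" using depth_parent[OF rt] by fastforce
  then show ?case using card_mono[of "{r}"] by fastforce
next
  case (Suc k)
  have fin: "finite V" using rt by (simp add: rooted_tree_def)
  let ?L = "{u\<in>V. depth r p u = k}"
  have "{u\<in>V. depth r p u = Suc k} \<subseteq> (\<Union>u\<in>?L. children V r p u)"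
  proof
    fix v assume v: "v \<in> {u\<in>V. depth r p u = Suc k}"
    then have "v \<noteq> r" by auto
    with v rt show "v \<in> (\<Union>u\<in>?L. children V r p u)"
      using depth_parent[OF rt] by (auto simp: children_def rooted_tree_def)
  qed
  then have "card {u\<in>V. depth r p u = Suc k} \<le> card (\<Union>u\<in>?L. children V r p u)"
    by (intro card_mono finite_UN_I) (use fin in \<open>auto simp: children_def\<close>)
  also have "\<dots> \<le> (\<Sum>u\<in>?L. card (children V r p u))"
    by (rule card_UN_le) (use fin in auto)
  also have "\<dots> \<le> card ?L * \<Delta>" using sum_mono[of ?L _ "\<lambda>_. \<Delta>"] ch by simp
  also have "\<dots> \<le> \<Delta> ^ Suc k" using Suc.IH by simp
  finally show ?case .
qed

lemma sum_power_lessThan_le_power: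
  fixes \<Delta> :: nat
  assumes "\<Delta> \<ge> 2"
  shows "(\<Sum>k<D. \<Delta> ^ k) \<le> \<Delta> ^ D"
proof (induction D)
  case (Suc D)
  then have "(\<Sum>k<Suc D. \<Delta> ^ k) \<le> 2 * \<Delta> ^ D" by simp
  also have "\<dots> \<le> \<Delta> ^ Suc D" using assms by simp
  finally show ?case .
qed simp

lemma card_depth_less_le:
  assumes rt: "rooted_tree V r p" and ch: "\<forall>u\<in>V. card (children V r p u) \<le> \<Delta>"
    and "\<Delta> \<ge> 2"
  shows "card {u\<in>V. depth r p u < D} \<le> \<Delta> ^ D"
proof -
  have fin: "finite V" using rt by (simp add: rooted_tree_def)
  have "{u\<in>V. depth r p u < D} = (\<Union>k<D. {u\<in>V. depth r p u = k})" by auto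
  then have "card {u\<in>V. depth r p u < D} \<le> (\<Sum>k<D. card {u\<in>V. depth r p u = k})"
    using card_UN_le[of "{..<D}" "\<lambda>k. {u\<in>V. depth r p u = k}"] by simp
  also have "\<dots> \<le> (\<Sum>k<D. \<Delta> ^ k)" by (intro sum_mono card_depth_eq_le[OF rt ch])
  also have "\<dots> \<le> \<Delta> ^ D" using sum_power_lessThan_le_power assms(3) by blast
  finally show ?thesis .
qed

lemma ancestor_leaving_set:
  assumes rt: "rooted_tree V r p" and "r \<in> A" and v: "v \<in> V" "v \<notin> A"
  obtains w where "w \<in> V" "w \<notin> A" "p w \<in> A" "v \<in> subtree V p w"
proof -
  obtain k where "(p ^^ k) v = r" using rt v by (auto simp: rooted_tree_def)
  then have "(p ^^ Suc k) v \<in> A" using rt \<open>r \<in> A\<close> by (simp add: rooted_tree_def)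
  then obtain j where j: "(p ^^ Suc j) v \<in> A" and below: "\<forall>i<j. (p ^^ Suc i) v \<notin> A"
    using exists_least_iff[of "\<lambda>j. (p ^^ Suc j) v \<in> A"] by blast
  have "(p ^^ j) v \<notin> A" using v(2) below by (cases j) auto
  moreover have "(p ^^ j) v \<in> V" using rooted_tree_funpow_in[OF rt v(1)] .
  moreover have "v \<in> subtree V p ((p ^^ j) v)" using v(1) by (auto simp: subtree_def)
  ultimately show ?thesis using j that by simp
qed

lemma card_outside_le:
  assumes rt: "rooted_tree V r p" and "r \<in> A"
    and small: "\<forall>w\<in>V - A. subtree_size V p w \<le> s"
  shows "card (V - A) \<le> card {w\<in>V - A. p w \<in> A} * s"
proof -
  let ?F = "{w\<in>V - A. p w \<in> A}"
  have fin: "finite V" using rt by (simp add: rooted_tree_def)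
  have "V - A \<subseteq> (\<Union>w\<in>?F. subtree V p w)"
    using ancestor_leaving_set[OF rt \<open>r \<in> A\<close>] by blast
  then have "card (V - A) \<le> card (\<Union>w\<in>?F. subtree V p w)"
    by (intro card_mono finite_UN_I) (use fin in \<open>auto simp: subtree_def\<close>)
  also have "\<dots> \<le> (\<Sum>w\<in>?F. card (subtree V p w))"
    by (rule card_UN_le) (use fin in auto)
  also have "\<dots> \<le> card ?F * s"
    using sum_mono[of ?F _ "\<lambda>_. s"] small by (simp add: subtree_size_eq_card_subtree)
  finally show ?thesis .
qed

lemma card_exits_le:
  assumes rt: "rooted_tree V r p" and "r \<in> A" "A \<subseteq> V"
  shows "card {w\<in>V - A. p w \<in> A} \<le> (\<Sum>u\<in>A. card (children V r p u))"
proof -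
  have fin: "finite V" using rt by (simp add: rooted_tree_def)
  have "{w\<in>V - A. p w \<in> A} \<subseteq> (\<Union>u\<in>A. children V r p u)"
    using \<open>r \<in> A\<close> by (auto simp: children_def)
  then have "card {w\<in>V - A. p w \<in> A} \<le> card (\<Union>u\<in>A. children V r p u)"
    by (intro card_mono finite_UN_I) (use fin \<open>A \<subseteq> V\<close> in \<open>auto simp: children_def intro: finite_subset\<close>)
  also have "\<dots> \<le> (\<Sum>u\<in>A. card (children V r p u))"
    by (rule card_UN_le) (use fin \<open>A \<subseteq> V\<close> in \<open>auto intro: finite_subset\<close>)
  finally show ?thesis .
qed

lemma card_le_heavy_vertices:
  assumes rt: "rooted_tree V r p"
    and ch: "\<forall>u\<in>V. card (children V r p u) \<le> b + (if u = r then 1 else 0)"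
    and "t \<le> card V"
  defines "A \<equiv> {u\<in>V. t \<le> subtree_size V p u}"
  shows "card V \<le> card A + (b * card A + 1) * (t - 1)"
proof -
  have fin: "finite V" using rt by (simp add: rooted_tree_def)
  have AV: "A \<subseteq> V" by (auto simp: A_def)
  have rA: "r \<in> A"
    using rt \<open>t \<le> card V\<close> subtree_root[OF rt]
    by (auto simp: A_def rooted_tree_def subtree_size_eq_card_subtree)
  have "card (V - A) \<le> card {w\<in>V - A. p w \<in> A} * (t - 1)"
    by (rule card_outside_le[OF rt rA]) (auto simp: A_def)
  also have "\<dots> \<le> (\<Sum>u\<in>A. card (children V r p u)) * (t - 1)"
    using card_exits_le[OF rt rA AV] by simp
  also have "\<dots> \<le> (\<Sum>u\<in>A. b + (if u = r then 1 else 0)) * (t - 1)"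
    using sum_mono[of A "\<lambda>u. card (children V r p u)"] ch AV by (simp add: subset_iff)
  also have "\<dots> = (b * card A + 1) * (t - 1)"
    using rA AV fin by (simp add: sum.distrib finite_subset)
  finally show ?thesis
    using card_Diff_subset[OF finite_subset[OF AV fin] AV] card_mono[OF fin AV] by linarith
qed

lemma heavy_vertices_lower_bound:
  assumes rt: "rooted_tree V r p" and deg: "\<forall>u\<in>V. tree_degree V r p u \<le> \<Delta>"
    and "\<Delta> \<ge> 2" "t \<ge> 1"
  shows "(real (card V) - real t) / ((real \<Delta> - 1) * real t)
           \<le> real (card {u\<in>V. t \<le> subtree_size V p u})"
proof -
  define a where "a = card {u\<in>V. t \<le> subtree_size V p u}"
  have "real (card V) - real t \<le> (real \<Delta> - 1) * real t * real a"
  proof (cases "t \<le> card V")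
    case True
    have "\<forall>u\<in>V. card (children V r p u) \<le> (\<Delta> - 1) + (if u = r then 1 else 0)"
      using deg \<open>\<Delta> \<ge> 2\<close> by (auto simp: tree_degree_def split: if_splits)
    from card_le_heavy_vertices[OF rt this True]
    have "real (card V) \<le> real (a + ((\<Delta> - 1) * a + 1) * (t - 1))"
      unfolding a_def of_nat_le_iff .
    also have "\<dots> = real a + (real (\<Delta> - 1) * real a + 1) * real (t - 1)"
      by (simp only: of_nat_add of_nat_mult of_nat_1)
    also have "\<dots> = real a + ((real \<Delta> - 1) * real a + 1) * (real t - 1)"
      using \<open>\<Delta> \<ge> 2\<close> \<open>t \<ge> 1\<close> by (simp add: of_nat_diff)
    finally have "real (card V) \<le> real a + ((real \<Delta> - 1) * real a + 1) * (real t - 1)" .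
    moreover have "real a * (real \<Delta> - 2) \<ge> 0" using \<open>\<Delta> \<ge> 2\<close> by simp
    ultimately show ?thesis by (simp add: algebra_simps)
  next
    case False
    moreover have "0 \<le> (real \<Delta> - 1) * real t * real a" using \<open>\<Delta> \<ge> 2\<close> by simp
    ultimately show ?thesis by simp
  qed
  then show ?thesis
    using \<open>\<Delta> \<ge> 2\<close> \<open>t \<ge> 1\<close> by (simp add: a_def pos_divide_le_eq mult.commute)
qed

lemma sum_card_superlevel_le:
  fixes f :: "'a \<Rightarrow> nat"
  assumes "finite V"
  shows "(\<Sum>t=1..D. card {u\<in>V. t \<le> f u}) \<le> (\<Sum>u\<in>V. f u)"
proof -
  have "(\<Sum>t=1..D. card {u\<in>V. t \<le> f u}) = (\<Sum>t=1..D. \<Sum>u\<in>V. if t \<le> f u then 1 else 0)"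
    by (intro sum.cong refl) (simp add: assms flip: sum.inter_filter)
  also have "\<dots> = (\<Sum>u\<in>V. \<Sum>t=1..D. if t \<le> f u then 1 else 0)"
    by (rule sum.swap)
  also have "\<dots> = (\<Sum>u\<in>V. card {t\<in>{1..D}. t \<le> f u})"
    by (intro sum.cong refl) (simp flip: sum.inter_filter)
  also have "\<dots> \<le> (\<Sum>u\<in>V. card {1..f u})"
    by (intro sum_mono card_mono) auto
  finally show ?thesis by simp
qed

definition layer_count_bound :: "nat \<Rightarrow> nat \<Rightarrow> nat \<Rightarrow> real" where
  "layer_count_bound \<Delta> n D =
     (\<Sum>t=1..D. (real n - real t) / ((real \<Delta> - 1) * real t)) - real D * real \<Delta> ^ D"

lemma layer_count_bound_le_sum_min:
  assumes rt: "rooted_tree V r p" and deg: "\<forall>u\<in>V. tree_degree V r p u \<le> \<Delta>" and "\<Delta> \<ge> 2"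
  shows "layer_count_bound \<Delta> (card V) D \<le> (\<Sum>u\<in>V. real (min (depth r p u) (subtree_size V p u)))"
proof -
  let ?m = "\<lambda>u. min (depth r p u) (subtree_size V p u)"
  have fin: "finite V" using rt by (simp add: rooted_tree_def)
  have "\<forall>u\<in>V. card (children V r p u) \<le> \<Delta>"
    using deg by (auto simp: tree_degree_def split: if_splits)
  then have shallow: "card {u\<in>V. depth r p u < D} \<le> \<Delta> ^ D"
    using card_depth_less_le[OF rt _ \<open>\<Delta> \<ge> 2\<close>] by blast
  have layer: "(real (card V) - real t) / ((real \<Delta> - 1) * real t) - real \<Delta> ^ D
                 \<le> real (card {u\<in>V. t \<le> ?m u})" if t: "t \<in> {1..D}" for t
  proof -
    have "{u\<in>V. t \<le> subtree_size V p u} \<subseteq> {u\<in>V. t \<le> ?m u} \<union> {u\<in>V. depth r p u < D}"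
      using t by auto
    then have "card {u\<in>V. t \<le> subtree_size V p u} \<le> card ({u\<in>V. t \<le> ?m u} \<union> {u\<in>V. depth r p u < D})"
      using fin by (intro card_mono) auto
    then have "card {u\<in>V. t \<le> subtree_size V p u} \<le> card {u\<in>V. t \<le> ?m u} + \<Delta> ^ D"
      using card_Un_le[of "{u\<in>V. t \<le> ?m u}" "{u\<in>V. depth r p u < D}"] shallow by linarith
    then have "real (card {u\<in>V. t \<le> subtree_size V p u}) \<le> real (card {u\<in>V. t \<le> ?m u}) + real \<Delta> ^ D"
      by (metis of_nat_add of_nat_le_iff of_nat_power)
    then show ?thesis
      using heavy_vertices_lower_bound[OF rt deg \<open>\<Delta> \<ge> 2\<close>, of t] t by simp
  qed
  have "layer_count_bound \<Delta> (card V) D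
      = (\<Sum>t=1..D. (real (card V) - real t) / ((real \<Delta> - 1) * real t) - real \<Delta> ^ D)"
    by (simp add: layer_count_bound_def sum_subtractf)
  also have "\<dots> \<le> (\<Sum>t=1..D. real (card {u\<in>V. t \<le> ?m u}))"
    by (intro sum_mono layer)
  also have "\<dots> \<le> (\<Sum>u\<in>V. real (?m u))"
    using sum_card_superlevel_le[OF fin, where f = ?m and D = D] by (simp flip: of_nat_sum of_nat_le_iff)
  finally show ?thesis .
qed

definition depth_cutoff :: "nat \<Rightarrow> nat \<Rightarrow> nat" where
  "depth_cutoff \<Delta> n = nat \<lfloor>log (real \<Delta>) (real n) / 2\<rfloor>"

lemma layer_count_bound_at_depth_cutoff_ge:
  assumes "\<Delta> \<ge> 2" "n \<ge> 2"
  shows "real n / (real \<Delta> - 1) * (ln (ln (real n)) - ln (2 * ln (real \<Delta>)))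
           - ln (real n) / (2 * ln (real \<Delta>)) * (1 + sqrt (real n))
         \<le> layer_count_bound \<Delta> n (depth_cutoff \<Delta> n)"
proof -
  define D where "D = depth_cutoff \<Delta> n"
  define x a y where "x = real n" and "a = real \<Delta>" and "y = log a x / 2"
  have a: "a \<ge> 2" "ln a > 0" and x: "x \<ge> 2" "ln x > 0"
    using assms by (simp_all add: a_def x_def)
  have y_eq: "y = ln x / (2 * ln a)" by (simp add: y_def log_def)
  have "y > 0" using a x by (simp add: y_eq)
  have D_eq: "real D = of_int \<lfloor>y\<rfloor>"
    using \<open>y > 0\<close> by (simp add: D_def depth_cutoff_def y_def a_def x_def)
  then have D_le: "real D \<le> y" and D_ge: "y \<le> real D + 1" by linarith+
  have "(\<Sum>t=1..D. (x - real t) / ((a - 1) * real t)) = (\<Sum>t=1..D. x / (a - 1) * inverse (real t) - 1 / (a - 1))"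
    using a by (intro sum.cong refl) (auto simp: divide_simps)
  also have "\<dots> = x / (a - 1) * harm D - real D / (a - 1)"
    by (simp add: harm_def sum_subtractf sum_distrib_left)
  finally have sum_eq: "(\<Sum>t=1..D. (x - real t) / ((a - 1) * real t)) = x / (a - 1) * harm D - real D / (a - 1)" .
  have "ln y \<le> ln (real D + 1)" using \<open>y > 0\<close> D_ge by simp
  also have "\<dots> \<le> harm D" by (rule ln_le_harm)
  finally have harm_ge: "ln (ln x) - ln (2 * ln a) \<le> harm D"
    using a x by (simp add: y_eq ln_div)
  have "a ^ D = a powr real D" using a by (simp add: powr_realpow)
  also have "\<dots> \<le> a powr y" using a D_le by (intro powr_mono) auto
  also have "\<dots> = (a powr log a x) powr (1 / 2)" by (simp add: y_def powr_powr)
  also have "\<dots> = sqrt x" using a x by (simp add: powr_half_sqrt)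
  finally have "real D * a ^ D \<le> y * sqrt x" using D_le \<open>y > 0\<close> a by (intro mult_mono) auto
  moreover have "real D / (a - 1) \<le> real D / 1" using a by (intro divide_left_mono) auto
  then have "real D / (a - 1) \<le> y" using D_le by simp
  moreover have "x / (a - 1) * (ln (ln x) - ln (2 * ln a)) \<le> x / (a - 1) * harm D"
    using harm_ge a x by (intro mult_left_mono) auto
  moreover have "y * (1 + sqrt x) = y + y * sqrt x" by (simp add: algebra_simps)
  ultimately have "x / (a - 1) * (ln (ln x) - ln (2 * ln a)) - y * (1 + sqrt x)
                     \<le> (\<Sum>t=1..D. (x - real t) / ((a - 1) * real t)) - real D * a ^ D"
    unfolding sum_eq by linarith
  then show ?thesis by (simp only: layer_count_bound_def D_def y_eq x_def a_def)
qed

lemma ln_ln_dominates: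
  fixes c\<^sub>0 c c\<^sub>1 :: real
  assumes "c\<^sub>1 > 0"
  shows "\<forall>\<^sub>F x in at_top. c\<^sub>0 * x + c * ln x * (1 + sqrt x) \<le> c\<^sub>1 * x * ln (ln x)"
  using assms by real_asymp

lemma eventually_le_layer_count_bound:
  assumes "\<Delta> \<ge> 3"
  shows "\<forall>\<^sub>F n in sequentially.
           (real \<Delta> - 2) / (real \<Delta> - 1)^2 * real n * log (real \<Delta> - 1) (log (real \<Delta> - 1) (real n))
         \<le> layer_count_bound \<Delta> n (depth_cutoff \<Delta> n)"
proof -
  define b where "b = real \<Delta> - 1"
  define K where "K = (b - 1) / b^2"
  have b: "b \<ge> 2" "ln b > 0" using assms by (simp_all add: b_def)
  have "(b - 1) / b < ln b" using ln_add1_gt[of "b - 1"] b by simp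
  then have "b * (b - 1) < b * (b * ln b)" using b by (simp add: divide_less_eq mult.commute)
  then have "K / ln b < 1 / b" using b by (simp add: K_def power2_eq_square field_simps right_diff_distrib)
  then have "\<forall>\<^sub>F x in at_top. (ln (2 * ln \<Delta>) / b - K * ln (ln b) / ln b) * x
                + 1 / (2 * ln \<Delta>) * ln x * (1 + sqrt x) \<le> (1 / b - K / ln b) * x * ln (ln x)"
    by (intro ln_ln_dominates) simp
  from eventually_compose_filterlim[OF this filterlim_real_sequentially]
  show ?thesis using eventually_ge_at_top[of 2]
  proof eventually_elim
    case (elim n)
    define x where "x = real n"
    have x: "ln x > 0" using elim by (simp add: x_def)
    have "log b (log b x) = (ln (ln x) - ln (ln b)) / ln b"
      using x b by (simp add: log_def ln_div)
    then have "K * x * log b (log b x) = K / ln b * x * ln (ln x) - K * ln (ln b) / ln b * x"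
      by (simp only:) (simp add: diff_divide_distrib algebra_simps)
    moreover have "x / b * (ln (ln x) - ln (2 * ln \<Delta>)) = 1 / b * x * ln (ln x) - ln (2 * ln \<Delta>) / b * x"
      by (simp add: diff_divide_distrib algebra_simps)
    moreover have "ln (2 * ln \<Delta>) / b * x - K * ln (ln b) / ln b * x + 1 / (2 * ln \<Delta>) * ln x * (1 + sqrt x)
                     \<le> 1 / b * x * ln (ln x) - K / ln b * x * ln (ln x)"
      using elim(1) unfolding x_def[symmetric] by (simp only: left_diff_distrib)
    ultimately have "K * x * log b (log b x)
                 \<le> x / b * (ln (ln x) - ln (2 * ln \<Delta>)) - ln x / (2 * ln \<Delta>) * (1 + sqrt x)"
      by simp
    also have "\<dots> \<le> layer_count_bound \<Delta> n (depth_cutoff \<Delta> n)"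
      using layer_count_bound_at_depth_cutoff_ge[of \<Delta> n] assms elim(2) by (simp add: x_def b_def)
    finally show ?case by (simp add: K_def b_def x_def)
  qed
qed

theorem lemma4:
  fixes \<Delta> :: nat
  assumes "\<Delta> \<ge> 3"
  shows "\<exists>\<epsilon> :: nat \<Rightarrow> real. \<epsilon> \<longlonglongrightarrow> 0 \<and>
    (\<forall>n \<ge> 2. \<forall>V r p. rooted_tree V r p \<and> card V = n \<and> (\<forall>u\<in>V. tree_degree V r p u \<le> \<Delta>) \<longrightarrow>
       (\<Sum>u\<in>V. real (min (depth r p u) (subtree_size V p u)))
         \<ge> (1 - \<epsilon> n) * ((real \<Delta> - 2) / (real \<Delta> - 1)^2) * real n
             * log (real \<Delta> - 1) (log (real \<Delta> - 1) (real n)))"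
proof -
  define X where "X n = (real \<Delta> - 2) / (real \<Delta> - 1)^2 * real n
                          * log (real \<Delta> - 1) (log (real \<Delta> - 1) (real n))" for n
  \<comment> \<open>On the finitely many n where the estimate fails, \<open>\<epsilon> n = 1\<close> makes the claim trivial.\<close>
  define \<epsilon> :: "nat \<Rightarrow> real"
    where "\<epsilon> n = (if X n \<le> layer_count_bound \<Delta> n (depth_cutoff \<Delta> n) then 0 else 1)" for n
  have "\<forall>\<^sub>F n in sequentially. \<epsilon> n = 0"
    using eventually_le_layer_count_bound[OF assms] by eventually_elim (simp add: \<epsilon>_def X_def)
  then have "\<epsilon> \<longlonglongrightarrow> 0" by (rule tendsto_eventually)
  moreover have "(1 - \<epsilon> n) * X n \<le> (\<Sum>u\<in>V. real (min (depth r p u) (subtree_size V p u)))"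
    if "rooted_tree V r p" "card V = n" "\<forall>u\<in>V. tree_degree V r p u \<le> \<Delta>" for n V r p
    using layer_count_bound_le_sum_min[OF that(1,3), of "depth_cutoff \<Delta> n"] assms that(2)
    by (auto simp: \<epsilon>_def intro: sum_nonneg)
  ultimately show ?thesis by (auto simp: X_def mult.assoc)
qed

end
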